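(* Let $F$ be a non-archimedean local field of characteristic different from $2$ and residual characteristic $p$, and $\ell\neq p$ an odd prime. Let $\chi$ be an $\overline{\mathbf{F}}_\ell$-character of $F^\times$ with $\chi^2=\mathbf{1}$. Then $\mathrm{Ext}^1_{\mathrm{GL}_2(F)}(\mathbf{1},\chi\circ\det)=0$, where $\mathrm{Ext}^1_{\mathrm{GL}_2(F)}$ is computed in the category of smooth $\overline{\mathbf{F}}_\ell$-representations of $\mathrm{GL}_2(F)$ with trivial central character. *)

theory Defs
  imports "HOL-Analysis.Analysis" "HOL-Computational_Algebra.Polynomial"
begin

text \<open>A discrete valuation v is only meaningful on nonzero elements; v x = infinity for x = 0
  is encoded by val_ge.\<close>

definition val_ge :: "('f::field \<Rightarrow> int) \<Rightarrow> 'f \<Rightarrow> int \<Rightarrow> bool" where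
  "val_ge v x n \<longleftrightarrow> x = 0 \<or> n \<le> v x"

definition nonarch_local_field :: "('f::field \<Rightarrow> int) \<Rightarrow> bool" where
  "nonarch_local_field v \<longleftrightarrow>
     (\<forall>x y. x \<noteq> 0 \<longrightarrow> y \<noteq> 0 \<longrightarrow> v (x * y) = v x + v y) \<and>
     (\<forall>x y. x \<noteq> 0 \<longrightarrow> y \<noteq> 0 \<longrightarrow> x + y \<noteq> 0 \<longrightarrow> min (v x) (v y) \<le> v (x + y)) \<and>
     (\<exists>\<pi>. \<pi> \<noteq> 0 \<and> v \<pi> = 1) \<and>
     (\<forall>X :: nat \<Rightarrow> 'f.
        (\<forall>n. \<exists>N. \<forall>m\<ge>N. \<forall>m'\<ge>N. val_ge v (X m - X m') n) \<longrightarrow>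
        (\<exists>L. \<forall>n. \<exists>N. \<forall>m\<ge>N. val_ge v (X m - L) n)) \<and>
     (\<exists>S. finite S \<and> (\<forall>x. val_ge v x 0 \<longrightarrow> (\<exists>s\<in>S. val_ge v (x - s) 1)))"

text \<open>Residual characteristic p: p is prime and p = 0 in the residue field.\<close>

definition residual_char :: "('f::field \<Rightarrow> int) \<Rightarrow> nat \<Rightarrow> bool" where
  "residual_char v p \<longleftrightarrow> prime p \<and> val_ge v (of_nat p) 1"

definition GL2 :: "('f::field^2^2) set" where
  "GL2 = {g. det g \<noteq> 0}"

text \<open>K(n) = 1 + pi^n M_2(O), n \<ge> 1: a neighbourhood basis of 1 in GL_2(F).\<close>

definition congr_subgroup :: "('f::field \<Rightarrow> int) \<Rightarrow> int \<Rightarrow> ('f^2^2) set" where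
  "congr_subgroup v n = {g \<in> GL2. \<forall>i j. val_ge v (g $ i $ j - mat 1 $ i $ j) n}"

definition scalar_mat :: "'f::field \<Rightarrow> 'f^2^2" where
  "scalar_mat z = mat z"

definition is_alg_closure_of_Fl :: "'k::field itself \<Rightarrow> nat \<Rightarrow> bool" where
  "is_alg_closure_of_Fl _ l \<longleftrightarrow>
     CHAR('k) = l \<and>
     (\<forall>q :: 'k poly. 0 < degree q \<longrightarrow> (\<exists>x. poly q x = 0)) \<and>
     (\<forall>x :: 'k. \<exists>q :: 'k poly. q \<noteq> 0 \<and> (\<forall>i. coeff q i \<in> range of_nat) \<and> poly q x = 0)"

definition smooth_character :: "('f::field \<Rightarrow> int) \<Rightarrow> ('f \<Rightarrow> 'k::field) \<Rightarrow> bool" where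
  "smooth_character v chi \<longleftrightarrow>
     (\<forall>x. x \<noteq> 0 \<longrightarrow> chi x \<noteq> 0) \<and>
     (\<forall>x y. x \<noteq> 0 \<longrightarrow> y \<noteq> 0 \<longrightarrow> chi (x * y) = chi x * chi y) \<and>
     (\<exists>n\<ge>1. \<forall>u. val_ge v (u - 1) n \<longrightarrow> chi u = 1)"

text \<open>A smooth representation of GL_2(F) on the k-vector space ('e, smul) with trivial central
  character.  The action is only relevant on GL2.\<close>

definition smooth_rep_triv_central ::
  "('f::field \<Rightarrow> int) \<Rightarrow> ('k::field \<Rightarrow> 'e::ab_group_add \<Rightarrow> 'e) \<Rightarrow> ('f^2^2 \<Rightarrow> 'e \<Rightarrow> 'e) \<Rightarrow> bool" where
  "smooth_rep_triv_central v smul act \<longleftrightarrow>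
     Vector_Spaces.vector_space smul \<and>
     (\<forall>g\<in>GL2. Vector_Spaces.linear smul smul (act g)) \<and>
     (\<forall>x. act (mat 1) x = x) \<and>
     (\<forall>g\<in>GL2. \<forall>h\<in>GL2. \<forall>x. act (g ** h) x = act g (act h x)) \<and>
     (\<forall>x. \<exists>n\<ge>1. \<forall>g\<in>congr_subgroup v n. act g x = x) \<and>
     (\<forall>z x. z \<noteq> 0 \<longrightarrow> act (scalar_mat z) x = x)"

text \<open>Ext^1(1, chi o det) = 0 in the category of smooth k-representations of GL_2(F) with trivial
  central character, via Yoneda: every short exact sequence
  0 -> chi o det -> E -> 1 -> 0 in this category splits.  Both chi o det and 1 are realised on the
  one-dimensional space k.  The type 'e of the middle term is universally quantified.\<close>

definition ext1_triv_chidet_splits ::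
  "('f::field \<Rightarrow> int) \<Rightarrow> ('f \<Rightarrow> 'k::field) \<Rightarrow> ('k \<Rightarrow> 'e::ab_group_add \<Rightarrow> 'e) \<Rightarrow> bool" where
  "ext1_triv_chidet_splits v chi smul \<longleftrightarrow>
     (\<forall>(act :: 'f^2^2 \<Rightarrow> 'e \<Rightarrow> 'e) (i :: 'k \<Rightarrow> 'e) (q :: 'e \<Rightarrow> 'k).
        smooth_rep_triv_central v smul act \<and>
        Vector_Spaces.linear (*) smul i \<and> inj i \<and>
        Vector_Spaces.linear smul (*) q \<and> surj q \<and>
        range i = {x. q x = 0} \<and>
        (\<forall>g\<in>GL2. \<forall>a. act g (i a) = i (chi (det g) * a)) \<and>
        (\<forall>g\<in>GL2. \<forall>x. q (act g x) = q x)
        \<longrightarrow>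
        (\<exists>s :: 'k \<Rightarrow> 'e. Vector_Spaces.linear (*) smul s \<and>
            (\<forall>a. q (s a) = a) \<and> (\<forall>g\<in>GL2. \<forall>a. act g (s a) = s a)))"

end

theory Submission
  imports Defs
begin

text \<open>Fix a lift e of 1 in an extension E of 1 by chi o det. Then c g = g e - e is a 1-cocycle
  of GL_2(F) with values in chi o det, and E splits as soon as c is a coboundary
  g \<mapsto> (1 - chi (det g)) x. Smoothness makes c vanish on some nontrivial upper unipotent matrix;
  conjugating by diagonal matrices and by the Weyl element, c vanishes on all elementary matrices,
  hence on SL_2(F), so c = phi o det for a crossed homomorphism phi of F^x. If chi is nontrivial,
  commutativity of F^x makes phi a coboundary. If chi is trivial, phi is a homomorphism killing
  squares (c vanishes on the centre), so 2 phi = 0, and phi = 0 because l is odd.\<close>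

definition mat2 :: "'a::field \<Rightarrow> 'a \<Rightarrow> 'a \<Rightarrow> 'a \<Rightarrow> 'a^2^2" where
  "mat2 a b c d = (\<chi> i j. if i = 1 then (if j = 1 then a else b) else (if j = 1 then c else d))"

lemma mat2_nth [simp]:
  "mat2 a b c d $ 1 $ 1 = a" "mat2 a b c d $ 1 $ 2 = b"
  "mat2 a b c d $ 2 $ 1 = c" "mat2 a b c d $ 2 $ 2 = d"
  by (simp_all add: mat2_def)

lemma mat2_cases:
  obtains a b c d where "(g::'a::field^2^2) = mat2 a b c d"
  by (rule that[of "g $ 1 $ 1" "g $ 1 $ 2" "g $ 2 $ 1" "g $ 2 $ 2"]) (simp add: vec_eq_iff forall_2)

lemma mat2_eq_iff: "mat2 a b c d = mat2 a' b' c' d' \<longleftrightarrow> a = a' \<and> b = b' \<and> c = c' \<and> d = d'"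
  by (metis mat2_nth)

lemma mat2_mult:
  "mat2 a b c d ** mat2 a' b' c' d' =
     mat2 (a * a' + b * c') (a * b' + b * d') (c * a' + d * c') (c * b' + d * d')"
  by (simp add: vec_eq_iff forall_2 matrix_matrix_mult_def sum_2)

lemma det_mat2 [simp]: "det (mat2 a b c d) = a * d - b * c"
  by (simp add: det_2)

lemma mat_eq_mat2: "mat z = mat2 z 0 0 (z::'a::field)"
  by (simp add: vec_eq_iff forall_2 mat_def)

lemma scalar_mat_eq_mat2: "scalar_mat z = mat2 z 0 0 z"
  by (simp add: scalar_mat_def mat_eq_mat2)

lemma mat2_in_GL2_iff [simp]: "mat2 a b c d \<in> GL2 \<longleftrightarrow> a * d - b * c \<noteq> 0"
  by (simp add: GL2_def)

lemma GL2_mult: "g \<in> GL2 \<Longrightarrow> h \<in> GL2 \<Longrightarrow> g ** h \<in> GL2"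
  by (simp add: GL2_def det_mul)

lemma SL2_upper_lower_upper:
  assumes "a * d - b * c = 1" and "c \<noteq> 0"
  shows "mat2 1 ((a - 1) / c) 0 1 ** mat2 1 0 c 1 ** mat2 1 ((d - 1) / c) 0 1 = mat2 a b c d"
  using assms unfolding mat2_mult mat2_eq_iff by (auto simp: field_simps)

lemma crossed_hom_units_coboundary:
  fixes phi chi :: "'f::field \<Rightarrow> 'k::field"
  assumes crossed: "\<And>a b. a \<noteq> 0 \<Longrightarrow> b \<noteq> 0 \<Longrightarrow> phi (a * b) = phi a + chi a * phi b"
    and squares: "\<And>a. a \<noteq> 0 \<Longrightarrow> phi (a * a) = 0"
    and two: "(2::'k) \<noteq> 0"
  shows "\<exists>x. \<forall>a. a \<noteq> 0 \<longrightarrow> phi a = (1 - chi a) * x"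
proof (cases "\<exists>a0. a0 \<noteq> 0 \<and> chi a0 \<noteq> 1")
  case True
  then obtain a0 where a0: "a0 \<noteq> 0" "chi a0 \<noteq> 1" by blast
  have "phi a = (1 - chi a) * (phi a0 / (1 - chi a0))" if "a \<noteq> 0" for a
  proof -
    \<comment> \<open>expand phi (a a0) = phi (a0 a) in two ways\<close>
    have "(1 - chi a0) * phi a = (1 - chi a) * phi a0"
      using crossed[of a a0] crossed[of a0 a] that a0(1) by (simp add: algebra_simps)
    moreover have "1 - chi a0 \<noteq> 0" using a0(2) by simp
    ultimately show ?thesis by (simp add: nonzero_eq_divide_eq mult.commute mult.left_commute)
  qed
  then show ?thesis by blast
next
  case False
  have "phi a = 0" if "a \<noteq> 0" for a
  proof -
    have "chi a = 1" using False that by blast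
    then have "phi a + phi a = 0" using crossed[OF that that] squares[OF that] by simp
    then have "2 * phi a = 0" by (simp only: mult_2)
    then show ?thesis using two by simp
  qed
  then show ?thesis by (intro exI[of _ 0]) simp
qed

lemma two_neq_zero_if_CHAR_neq_2:
  assumes "CHAR('a::{semiring_1, zero_neq_one}) \<noteq> 2"
  shows "(2::'a) \<noteq> 0"
proof
  assume "(2::'a) = 0"
  then have dvd2: "CHAR('a) dvd 2" using of_nat_eq_0_iff_char_dvd[of 2, where 'a = 'a] by simp
  then have "CHAR('a) \<le> 2" by (simp add: dvd_imp_le)
  moreover have "CHAR('a) \<noteq> 0"
  proof
    assume "CHAR('a) = 0"
    with dvd2 show False by simp
  qed
  ultimately show False using assms CHAR_not_1[where 'a = 'a] by linarith
qed

locale chidet_cocycle =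
  fixes chi :: "'f::field \<Rightarrow> 'k::field" and c :: "'f^2^2 \<Rightarrow> 'k"
  assumes chi_mult: "\<And>x y. x \<noteq> 0 \<Longrightarrow> y \<noteq> 0 \<Longrightarrow> chi (x * y) = chi x * chi y"
    and chi_nonzero: "\<And>x. x \<noteq> 0 \<Longrightarrow> chi x \<noteq> 0"
    and cocycle: "\<And>g h. g \<in> GL2 \<Longrightarrow> h \<in> GL2 \<Longrightarrow> c (g ** h) = c g + chi (det g) * c h"
begin

lemma chi_one: "chi 1 = 1"
  using chi_mult[of 1 1] chi_nonzero[of 1] by simp

lemma cocycle_one: "c (mat 1) = 0"
proof -
  have "mat 1 \<in> (GL2 :: ('f^2^2) set)" by (simp add: GL2_def)
  from cocycle[OF this this] have "c (mat 1) = c (mat 1) + c (mat 1)"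
    by (simp only: matrix_mul_lid det_I chi_one mult_1)
  then show ?thesis by (simp only: add_cancel_right_right)
qed

lemma cocycle_mult_eq_0:
  assumes "g \<in> GL2" "h \<in> GL2" "c g = 0" "c h = 0"
  shows "c (g ** h) = 0"
  using assms cocycle by simp

lemma cocycle_conjugate:
  assumes g: "g \<in> GL2" and h: "det h = 1" and conj: "g ** h = h' ** g"
  shows "c h' = chi (det g) * c h"
proof -
  have "det h' * det g = det g"
    using h conj det_mul[of g h] det_mul[of h' g] by simp
  then have h': "det h' = 1" using g by (simp add: GL2_def)
  have "c (g ** h) = c g + chi (det g) * c h" using g h by (simp add: cocycle GL2_def)
  moreover have "c (h' ** g) = c h' + c g" using g h' chi_one by (simp add: cocycle GL2_def)
  ultimately show ?thesis using conj by simp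
qed

lemma cocycle_upper_scale:
  assumes "t \<noteq> 0"
  shows "c (mat2 1 (t * y) 0 1) = chi t * c (mat2 1 y 0 1)"
  using assms cocycle_conjugate[of "mat2 t 0 0 1" "mat2 1 y 0 1" "mat2 1 (t * y) 0 1"]
  by (simp add: mat2_mult)

lemma cocycle_lower_eq_upper: "c (mat2 1 0 y 1) = chi (- 1) * c (mat2 1 y 0 1)"
  using cocycle_conjugate[of "mat2 0 1 1 0" "mat2 1 y 0 1" "mat2 1 0 y 1"]
  by (simp add: mat2_mult)

context
  fixes y0 :: 'f
  assumes y0: "y0 \<noteq> 0" and upper_y0: "c (mat2 1 y0 0 1) = 0"
begin

lemma cocycle_upper_eq_0: "c (mat2 1 y 0 1) = 0"
proof (cases "y = 0")
  case True
  then show ?thesis using cocycle_one by (simp add: mat_eq_mat2)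
next
  case False
  then show ?thesis
    using cocycle_upper_scale[of "y / y0" y0] y0 upper_y0 by simp
qed

lemma cocycle_lower_eq_0: "c (mat2 1 0 y 1) = 0"
  using cocycle_lower_eq_upper cocycle_upper_eq_0 by simp

lemma cocycle_SL2_eq_0:
  assumes "det g = 1"
  shows "c g = 0"
proof -
  have generic: "c (mat2 a b u d) = 0" if "a * d - b * u = 1" "u \<noteq> 0" for a b u d
  proof -
    let ?U1 = "mat2 1 ((a - 1) / u) 0 1" and ?L = "mat2 1 0 u 1" and ?U2 = "mat2 1 ((d - 1) / u) 0 1"
    have "?U1 ** ?L \<in> GL2" by (simp add: GL2_mult)
    moreover have "c (?U1 ** ?L) = 0"
      by (rule cocycle_mult_eq_0) (simp_all add: cocycle_upper_eq_0 cocycle_lower_eq_0)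
    ultimately have "c (?U1 ** ?L ** ?U2) = 0"
      by (intro cocycle_mult_eq_0) (simp_all add: cocycle_upper_eq_0 cocycle_lower_eq_0)
    then show ?thesis using SL2_upper_lower_upper[OF that] by simp
  qed
  obtain a b u d where g: "g = mat2 a b u d" by (rule mat2_cases)
  show ?thesis
  proof (cases "u = 0")
    case False
    then show ?thesis using generic[of a d b u] assms g by simp
  next
    case True
    let ?g' = "mat2 a b a (b + d)"
    have ad: "a * d = 1" using assms g True by simp
    then have "a \<noteq> 0" by (metis mult_zero_left zero_neq_one)
    have det': "a * (b + d) - b * a = 1" using ad by (simp add: algebra_simps)
    \<comment> \<open>a row operation moves g into the big cell\<close>
    have g_eq: "g = mat2 1 0 (- 1) 1 ** ?g'" using g True by (simp add: mat2_mult)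
    have "c ?g' = 0" using generic[OF det' \<open>a \<noteq> 0\<close>] .
    moreover have "?g' \<in> GL2" using det' by simp
    ultimately have "c (mat2 1 0 (- 1) 1 ** ?g') = 0"
      by (intro cocycle_mult_eq_0) (simp_all add: cocycle_lower_eq_0)
    then show ?thesis using g_eq by simp
  qed
qed

lemma cocycle_eq_diag_det:
  assumes "g \<in> GL2"
  shows "c g = c (mat2 (det g) 0 0 1)"
proof -
  let ?g' = "g ** mat2 (1 / det g) 0 0 1"
  have det_g: "det g \<noteq> 0" using assms by (simp add: GL2_def)
  then have "g = ?g' ** mat2 (det g) 0 0 1"
    by (simp add: mat2_mult flip: matrix_mul_assoc mat_eq_mat2)
  moreover have "det ?g' = 1" using det_g by (simp add: det_mul)
  ultimately show ?thesis
    using cocycle[of ?g' "mat2 (det g) 0 0 1"] cocycle_SL2_eq_0 det_g chi_one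
    by (simp add: GL2_def)
qed

lemma cocycle_coboundary:
  assumes scalar: "\<And>z. z \<noteq> 0 \<Longrightarrow> c (scalar_mat z) = 0" and two: "(2::'k) \<noteq> 0"
  shows "\<exists>x. \<forall>g\<in>GL2. c g = (1 - chi (det g)) * x"
proof -
  define phi where "phi a = c (mat2 a 0 0 1)" for a
  have "phi (a * b) = phi a + chi a * phi b" if "a \<noteq> 0" "b \<noteq> 0" for a b
  proof -
    have "mat2 a 0 0 1 ** mat2 b 0 0 1 = mat2 (a * b) 0 0 1" by (simp add: mat2_mult)
    moreover have "c (mat2 a 0 0 1 ** mat2 b 0 0 1) = c (mat2 a 0 0 1) + chi a * c (mat2 b 0 0 1)"
      using that cocycle[of "mat2 a 0 0 1" "mat2 b 0 0 1"] by simp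
    ultimately show ?thesis by (simp add: phi_def)
  qed
  moreover have "phi (a * a) = 0" if "a \<noteq> 0" for a
  proof -
    have "scalar_mat a \<in> GL2" using that by (simp add: scalar_mat_eq_mat2)
    then have "c (scalar_mat a) = phi (a * a)"
      unfolding phi_def by (subst cocycle_eq_diag_det) (simp_all add: scalar_mat_eq_mat2)
    then show ?thesis using scalar[OF that] by simp
  qed
  ultimately obtain x where x: "\<forall>a. a \<noteq> 0 \<longrightarrow> phi a = (1 - chi a) * x"
    using crossed_hom_units_coboundary two by blast
  show ?thesis
  proof (intro exI ballI)
    fix g :: "'f^2^2"
    assume g: "g \<in> GL2"
    then have "det g \<noteq> 0" by (simp add: GL2_def)
    then show "c g = (1 - chi (det g)) * x"
      using x cocycle_eq_diag_det[OF g] by (simp add: phi_def)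
  qed
qed

end

end

lemma val_power:
  assumes "nonarch_local_field v" and "x \<noteq> 0"
  shows "v (x ^ k) = int k * v x"
proof (induction k)
  case 0
  have "v (1 * 1) = v 1 + v 1"
    using assms(1) unfolding nonarch_local_field_def by (metis one_neq_zero)
  then show ?case by simp
next
  case (Suc k)
  have "v (x * x ^ k) = v x + v (x ^ k)"
    using assms unfolding nonarch_local_field_def by simp
  then show ?case using Suc by (simp add: algebra_simps)
qed

lemma upper_unipotent_in_congr_subgroup:
  assumes "nonarch_local_field v"
  shows "\<exists>y. y \<noteq> 0 \<and> mat2 1 y 0 1 \<in> congr_subgroup v n"
proof -
  obtain \<pi> where \<pi>: "\<pi> \<noteq> 0" "v \<pi> = 1"
    using assms unfolding nonarch_local_field_def by blast
  define y where "y = \<pi> ^ nat n"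
  have "y \<noteq> 0" using \<pi> by (simp add: y_def)
  moreover have "val_ge v y n"
    using val_power[OF assms \<pi>(1)] \<pi>(2) by (simp add: val_ge_def y_def)
  ultimately show ?thesis
    by (intro exI[of _ y]) (simp add: congr_subgroup_def mat_eq_mat2 forall_2 val_ge_def)
qed

locale chidet_extension =
  fixes v :: "'f::field \<Rightarrow> int" and chi :: "'f \<Rightarrow> 'k::field"
    and smul :: "'k \<Rightarrow> 'e::ab_group_add \<Rightarrow> 'e"
    and act :: "'f^2^2 \<Rightarrow> 'e \<Rightarrow> 'e" and i :: "'k \<Rightarrow> 'e" and q :: "'e \<Rightarrow> 'k"
  assumes rep: "smooth_rep_triv_central v smul act"
    and i_linear: "Vector_Spaces.linear (*) smul i" and i_inj: "inj i"
    and q_linear: "Vector_Spaces.linear smul (*) q" and q_surj: "surj q"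
    and range_i: "range i = {x. q x = 0}"
    and act_i: "\<And>g a. g \<in> GL2 \<Longrightarrow> act g (i a) = i (chi (det g) * a)"
    and q_act: "\<And>g x. g \<in> GL2 \<Longrightarrow> q (act g x) = q x"
begin

definition lift :: 'e where
  "lift = (SOME e. q e = 1)"

definition cocycle :: "'f^2^2 \<Rightarrow> 'k" where
  "cocycle g = inv i (act g lift - lift)"

lemma act_hom: "g \<in> GL2 \<Longrightarrow> module_hom smul smul (act g)"
  using rep by (simp add: smooth_rep_triv_central_def module_hom_iff_linear)

lemma i_hom: "module_hom (*) smul i"
  using i_linear by (simp add: module_hom_iff_linear)

lemma q_hom: "module_hom smul (*) q"
  using q_linear by (simp add: module_hom_iff_linear)

lemma q_lift: "q lift = 1"
proof -
  obtain e where "q e = 1" using q_surj by (metis surjD)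
  then show ?thesis unfolding lift_def by (rule someI)
qed

lemma act_lift:
  assumes "g \<in> GL2"
  shows "act g lift = lift + i (cocycle g)"
proof -
  have "act g lift - lift \<in> range i"
    using range_i q_act[OF assms] module_hom.diff[OF q_hom] by simp
  then show ?thesis by (simp add: cocycle_def f_inv_into_f)
qed

lemma cocycle_eq_0_iff:
  assumes "g \<in> GL2"
  shows "cocycle g = 0 \<longleftrightarrow> act g lift = lift"
  using act_lift[OF assms] i_inj module_hom.zero[OF i_hom]
  by (metis add_cancel_left_right inj_eq)

lemma cocycle_mult:
  assumes g: "g \<in> GL2" and h: "h \<in> GL2"
  shows "cocycle (g ** h) = cocycle g + chi (det g) * cocycle h"
proof -
  have "lift + i (cocycle (g ** h)) = act g (act h lift)"
    using act_lift[OF GL2_mult[OF g h]] rep g h by (simp add: smooth_rep_triv_central_def)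
  also have "\<dots> = lift + i (cocycle g + chi (det g) * cocycle h)"
    using act_lift[OF g] act_lift[OF h] act_i[OF g] module_hom.add[OF act_hom[OF g]]
      module_hom.add[OF i_hom] by (simp add: add.assoc)
  finally show ?thesis using i_inj by (simp add: inj_eq)
qed

lemma cocycle_scalar: "z \<noteq> 0 \<Longrightarrow> cocycle (scalar_mat z) = 0"
  using rep cocycle_eq_0_iff[of "scalar_mat z"]
  by (simp add: smooth_rep_triv_central_def scalar_mat_eq_mat2)

lemma cocycle_smooth: "\<exists>n. \<forall>g\<in>congr_subgroup v n. cocycle g = 0"
proof -
  have "\<forall>x. \<exists>n\<ge>1. \<forall>g\<in>congr_subgroup v n. act g x = x"
    using rep by (simp add: smooth_rep_triv_central_def)
  then obtain n where n: "\<forall>g\<in>congr_subgroup v n. act g lift = lift" by blast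
  have "cocycle g = 0" if "g \<in> congr_subgroup v n" for g
    using that n cocycle_eq_0_iff[of g] by (simp add: congr_subgroup_def)
  then show ?thesis by blast
qed

lemma splits_if_coboundary:
  assumes coboundary: "\<And>g. g \<in> GL2 \<Longrightarrow> cocycle g = (1 - chi (det g)) * x"
  shows "\<exists>s. Vector_Spaces.linear (*) smul s \<and> (\<forall>a. q (s a) = a) \<and>
    (\<forall>g\<in>GL2. \<forall>a. act g (s a) = s a)"
proof -
  define e where "e = lift + i x"
  have e_fixed: "act g e = e" if g: "g \<in> GL2" for g
  proof -
    have "act g e = lift + i (cocycle g + chi (det g) * x)"
      using act_lift[OF g] act_i[OF g] module_hom.add[OF act_hom[OF g]] module_hom.add[OF i_hom]
      by (simp add: e_def add.assoc)
    also have "cocycle g + chi (det g) * x = x"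
      using coboundary[OF g] by (simp add: algebra_simps)
    finally show ?thesis by (simp add: e_def)
  qed
  have q_e: "q e = 1"
    using q_lift range_i module_hom.add[OF q_hom] by (auto simp: e_def)
  have "Vector_Spaces.linear (*) smul (\<lambda>a. smul a e)"
    using i_linear rep
    by (simp add: Vector_Spaces.linear_iff vector_space_def smooth_rep_triv_central_def)
  moreover have "q (smul a e) = a" for a
    using module_hom.scale[OF q_hom] q_e by simp
  moreover have "act g (smul a e) = smul a e" if "g \<in> GL2" for g a
    using module_hom.scale[OF act_hom[OF that]] e_fixed[OF that] by simp
  ultimately show ?thesis by blast
qed

end

theorem lemma4p4:
  fixes v :: "'f::field \<Rightarrow> int"
    and p l :: nat
    and chi :: "'f \<Rightarrow> 'k::field"
    and smul :: "'k \<Rightarrow> 'e::ab_group_add \<Rightarrow> 'e"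
  assumes "nonarch_local_field v"
    and "(2::'f) \<noteq> 0"
    and "residual_char v p"
    and "prime l" and "odd l" and "l \<noteq> p"
    and "is_alg_closure_of_Fl TYPE('k) l"
    and "smooth_character v chi"
    and "\<forall>x. x \<noteq> 0 \<longrightarrow> chi x * chi x = 1"
  shows "ext1_triv_chidet_splits v chi smul"
  unfolding ext1_triv_chidet_splits_def
proof (intro allI impI, elim conjE)
  fix act :: "'f^2^2 \<Rightarrow> 'e \<Rightarrow> 'e" and i :: "'k \<Rightarrow> 'e" and q :: "'e \<Rightarrow> 'k"
  assume "smooth_rep_triv_central v smul act" "Vector_Spaces.linear (*) smul i" "inj i"
    "Vector_Spaces.linear smul (*) q" "surj q" "range i = {x. q x = 0}"
    "\<forall>g\<in>GL2. \<forall>a. act g (i a) = i (chi (det g) * a)" "\<forall>g\<in>GL2. \<forall>x. q (act g x) = q x"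
  then interpret E: chidet_extension v chi smul act i q
    by (simp add: chidet_extension_def)
  interpret C: chidet_cocycle chi E.cocycle
    using assms(8) E.cocycle_mult by unfold_locales (auto simp: smooth_character_def)
  obtain n where n: "\<forall>g\<in>congr_subgroup v n. E.cocycle g = 0"
    using E.cocycle_smooth by blast
  obtain y where "y \<noteq> 0" "mat2 1 y 0 1 \<in> congr_subgroup v n"
    using upper_unipotent_in_congr_subgroup[OF assms(1)] by blast
  moreover have "(2::'k) \<noteq> 0"
    using assms(5,7) by (intro two_neq_zero_if_CHAR_neq_2) (auto simp: is_alg_closure_of_Fl_def)
  ultimately obtain x where "\<forall>g\<in>GL2. E.cocycle g = (1 - chi (det g)) * x"
    using C.cocycle_coboundary n E.cocycle_scalar by blast
  then show "\<exists>s. Vector_Spaces.linear (*) smul s \<and> (\<forall>a. q (s a) = a) \<and>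
      (\<forall>g\<in>GL2. \<forall>a. act g (s a) = s a)"
    using E.splits_if_coboundary by blast
qed

end
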